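(* Let $G$ be a graph with a vertex $r$ that belongs to at least one but not all minimum vertex covers of $G$ and satisfies $N[r]\subsetneq V(G)$. Let $Y$ be a minimal blocking set of $G$ with $r\notin Y$. Then: (i) $Y$ is a blocking set of $G-r$ and $Y\setminus N[r]$ is a blocking set of $G-N[r]$; (ii) for every minimal blocking set $Y'$ of $G-r$ and every minimal blocking set $\widetilde Y$ of $G-N[r]$, the set $Y'\cup\widetilde Y$ is a blocking set of $G$; (iii) for every $y\in Y$, either $Y\setminus\{y\}$ is not a blocking set of $G-r$, or $Y\setminus(\{y\}\cup N[r])$ is not a blocking set of $G-N[r]$.
   Context: $\mathrm{OPT}(G)$ is the minimum vertex cover size; minimum vertex covers have size $\mathrm{OPT}(G)$. $Y\subseteq V(G)$ is a blocking set if no minimum vertex cover contains $Y$; minimal if no proper subset is. $N(r)$ is the open and $N[r]=N(r)\cup\{r\}$ the closed neighborhood of $r$. *)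

theory Defs
  imports Main
begin

text \<open>A finite simple graph is given by a finite vertex set V and a symmetric,
irreflexive edge relation E; only edges between vertices of V count.
The induced subgraph G - S is (V - S, E).\<close>

definition simple_graph :: "'a set \<Rightarrow> ('a \<Rightarrow> 'a \<Rightarrow> bool) \<Rightarrow> bool" where
  "simple_graph V E \<longleftrightarrow> finite V \<and> (\<forall>u v. E u v \<longrightarrow> E v u) \<and> (\<forall>u. \<not> E u u)"

definition vertex_cover :: "'a set \<Rightarrow> ('a \<Rightarrow> 'a \<Rightarrow> bool) \<Rightarrow> 'a set \<Rightarrow> bool" where
  "vertex_cover V E C \<longleftrightarrow> C \<subseteq> V \<and> (\<forall>u\<in>V. \<forall>v\<in>V. E u v \<longrightarrow> u \<in> C \<or> v \<in> C)"

definition OPT :: "'a set \<Rightarrow> ('a \<Rightarrow> 'a \<Rightarrow> bool) \<Rightarrow> nat" where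
  "OPT V E = Min (card ` {C. vertex_cover V E C})"

definition min_vertex_cover :: "'a set \<Rightarrow> ('a \<Rightarrow> 'a \<Rightarrow> bool) \<Rightarrow> 'a set \<Rightarrow> bool" where
  "min_vertex_cover V E C \<longleftrightarrow> vertex_cover V E C \<and> card C = OPT V E"

definition blocking_set :: "'a set \<Rightarrow> ('a \<Rightarrow> 'a \<Rightarrow> bool) \<Rightarrow> 'a set \<Rightarrow> bool" where
  "blocking_set V E Y \<longleftrightarrow> Y \<subseteq> V \<and> (\<forall>C. min_vertex_cover V E C \<longrightarrow> \<not> Y \<subseteq> C)"

definition minimal_blocking_set :: "'a set \<Rightarrow> ('a \<Rightarrow> 'a \<Rightarrow> bool) \<Rightarrow> 'a set \<Rightarrow> bool" where
  "minimal_blocking_set V E Y \<longleftrightarrow> blocking_set V E Y \<and> (\<forall>Z. Z \<subset> Y \<longrightarrow> \<not> blocking_set V E Z)"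

definition open_nbhd :: "'a set \<Rightarrow> ('a \<Rightarrow> 'a \<Rightarrow> bool) \<Rightarrow> 'a \<Rightarrow> 'a set" where
  "open_nbhd V E r = {v\<in>V. E r v}"

definition closed_nbhd :: "'a set \<Rightarrow> ('a \<Rightarrow> 'a \<Rightarrow> bool) \<Rightarrow> 'a \<Rightarrow> 'a set" where
  "closed_nbhd V E r = insert r (open_nbhd V E r)"

end

theory Submission
  imports Defs
begin

text \<open>Removing r from a minimum cover containing it, or N(r) from one avoiding it, leaves
a minimum cover of G - r, resp. G - N[r]; conversely, when r lies in some but not all minimum
covers, adding r, resp. N(r), back turns every minimum cover of these subgraphs into a minimum
cover of G. Hence a blocking set of G restricts to blocking sets of both subgraphs, and any set
that contains a blocking set of G - r and one of G - N[r] blocks G, because each minimum cover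
of G either contains r or avoids it. Part (iii) then follows from minimality of Y.\<close>

lemma vertex_cover_finite: "finite V \<Longrightarrow> vertex_cover V E C \<Longrightarrow> finite C"
  by (auto simp: vertex_cover_def intro: finite_subset)

lemma finite_vertex_covers: "finite V \<Longrightarrow> finite {C. vertex_cover V E C}"
  by (rule finite_subset[of _ "Pow V"]) (auto simp: vertex_cover_def)

lemma OPT_le_card: "finite V \<Longrightarrow> vertex_cover V E C \<Longrightarrow> OPT V E \<le> card C"
  unfolding OPT_def by (rule Min_le) (auto simp: finite_vertex_covers)

lemma min_vertex_cover_exists:
  assumes "finite V"
  obtains C where "min_vertex_cover V E C"
proof -
  have "vertex_cover V E V" by (auto simp: vertex_cover_def)
  hence "OPT V E \<in> card ` {C. vertex_cover V E C}"
    unfolding OPT_def by (intro Min_in) (auto simp: finite_vertex_covers assms)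
  thus ?thesis using that by (auto simp: min_vertex_cover_def)
qed

lemma vertex_cover_Diff: "vertex_cover V E C \<Longrightarrow> vertex_cover (V - S) E (C - S)"
  by (auto simp: vertex_cover_def)

lemma vertex_cover_insert: "r \<in> V \<Longrightarrow> vertex_cover (V - {r}) E D \<Longrightarrow> vertex_cover V E (insert r D)"
  by (auto simp: vertex_cover_def)

lemma vertex_cover_Un_open_nbhd:
  assumes sym: "\<And>u v. E u v \<Longrightarrow> E v u"
    and D: "vertex_cover (V - closed_nbhd V E r) E D"
  shows "vertex_cover V E (D \<union> open_nbhd V E r)"
  using D sym unfolding vertex_cover_def closed_nbhd_def open_nbhd_def by blast

lemma open_nbhd_subset_vertex_cover:
  "r \<in> V \<Longrightarrow> vertex_cover V E C \<Longrightarrow> r \<notin> C \<Longrightarrow> open_nbhd V E r \<subseteq> C"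
  by (auto simp: vertex_cover_def open_nbhd_def)

lemma card_open_nbhd_le_OPT:
  assumes "finite V" "r \<in> V" "min_vertex_cover V E C" "r \<notin> C"
  shows "card (open_nbhd V E r) \<le> OPT V E"
  using assms open_nbhd_subset_vertex_cover vertex_cover_finite card_mono
  unfolding min_vertex_cover_def by metis

lemma OPT_Diff_covered_vertex:
  assumes fin: "finite V" and C: "min_vertex_cover V E C" and rC: "r \<in> C"
  shows "OPT (V - {r}) E = OPT V E - 1" and "OPT V E \<ge> 1"
proof -
  have vc: "vertex_cover V E C" and cardC: "card C = OPT V E"
    using C by (auto simp: min_vertex_cover_def)
  have finC: "finite C" using vertex_cover_finite[OF fin vc] .
  have "card C \<noteq> 0" using finC rC by auto
  thus pos: "OPT V E \<ge> 1" using cardC by simp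
  have rV: "r \<in> V" using vc rC by (auto simp: vertex_cover_def)
  have "OPT (V - {r}) E \<le> card (C - {r})"
    using OPT_le_card[OF _ vertex_cover_Diff[OF vc]] fin by simp
  also have "\<dots> = OPT V E - 1" using finC rC cardC by simp
  finally have upper: "OPT (V - {r}) E \<le> OPT V E - 1" .
  obtain D where D: "min_vertex_cover (V - {r}) E D"
    using min_vertex_cover_exists[of "V - {r}"] fin by blast
  hence vcD: "vertex_cover (V - {r}) E D" by (simp add: min_vertex_cover_def)
  have "r \<notin> D" using vcD by (auto simp: vertex_cover_def)
  moreover have "finite D" using vertex_cover_finite[OF _ vcD] fin by simp
  ultimately have "OPT V E \<le> card D + 1"
    using OPT_le_card[OF fin vertex_cover_insert[OF rV vcD]] by simp
  thus "OPT (V - {r}) E = OPT V E - 1"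
    using upper D by (simp add: min_vertex_cover_def)
qed

lemma OPT_Diff_closed_nbhd:
  assumes G: "simple_graph V E" and rV: "r \<in> V"
    and C: "min_vertex_cover V E C" and rC: "r \<notin> C"
  shows "OPT (V - closed_nbhd V E r) E = OPT V E - card (open_nbhd V E r)"
proof -
  let ?N = "open_nbhd V E r"
  have fin: "finite V" and sym: "\<And>u v. E u v \<Longrightarrow> E v u"
    using G by (auto simp: simple_graph_def)
  have finN: "finite ?N" using fin by (simp add: open_nbhd_def)
  have vc: "vertex_cover V E C" and cardC: "card C = OPT V E"
    using C by (auto simp: min_vertex_cover_def)
  have NC: "?N \<subseteq> C" using open_nbhd_subset_vertex_cover[OF rV vc rC] .
  have "C - closed_nbhd V E r = C - ?N" using rC by (auto simp: closed_nbhd_def)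
  hence "vertex_cover (V - closed_nbhd V E r) E (C - ?N)"
    using vertex_cover_Diff[OF vc, of "closed_nbhd V E r"] by simp
  hence "OPT (V - closed_nbhd V E r) E \<le> card (C - ?N)"
    using OPT_le_card fin by blast
  also have "\<dots> = OPT V E - card ?N" using card_Diff_subset[OF finN NC] cardC by simp
  finally have upper: "OPT (V - closed_nbhd V E r) E \<le> OPT V E - card ?N" .
  obtain D where D: "min_vertex_cover (V - closed_nbhd V E r) E D"
    using min_vertex_cover_exists[of "V - closed_nbhd V E r"] fin by blast
  hence vcD: "vertex_cover (V - closed_nbhd V E r) E D"
    by (simp add: min_vertex_cover_def)
  have "D \<inter> ?N = {}" using vcD by (auto simp: vertex_cover_def closed_nbhd_def)
  moreover have "finite D" using vertex_cover_finite[OF _ vcD] fin by simp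
  ultimately have "card (D \<union> ?N) = card D + card ?N" using finN by (simp add: card_Un_disjoint)
  hence "OPT V E \<le> card D + card ?N"
    using OPT_le_card[OF fin vertex_cover_Un_open_nbhd[OF sym vcD]] by simp
  thus ?thesis using upper D by (simp add: min_vertex_cover_def)
qed

lemma min_vertex_cover_Diff_vertex:
  assumes fin: "finite V" and C: "min_vertex_cover V E C" and rC: "r \<in> C"
  shows "min_vertex_cover (V - {r}) E (C - {r})"
proof -
  have vc: "vertex_cover V E C" and cardC: "card C = OPT V E"
    using C by (auto simp: min_vertex_cover_def)
  have "card (C - {r}) = OPT V E - 1"
    using vertex_cover_finite[OF fin vc] rC cardC by simp
  thus ?thesis using vertex_cover_Diff[OF vc] OPT_Diff_covered_vertex[OF fin C rC]
    by (simp add: min_vertex_cover_def)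
qed

lemma min_vertex_cover_insert_vertex:
  assumes fin: "finite V" and rV: "r \<in> V" and C: "min_vertex_cover V E C" "r \<in> C"
    and D: "min_vertex_cover (V - {r}) E D"
  shows "min_vertex_cover V E (insert r D)"
proof -
  have vcD: "vertex_cover (V - {r}) E D" using D by (simp add: min_vertex_cover_def)
  have "r \<notin> D" using vcD by (auto simp: vertex_cover_def)
  moreover have "finite D" using vertex_cover_finite[OF _ vcD] fin by simp
  ultimately have "card (insert r D) = OPT V E"
    using D OPT_Diff_covered_vertex[OF fin C] by (simp add: min_vertex_cover_def)
  thus ?thesis using vertex_cover_insert[OF rV vcD] by (simp add: min_vertex_cover_def)
qed

lemma min_vertex_cover_Diff_open_nbhd:
  assumes G: "simple_graph V E" and rV: "r \<in> V"
    and C: "min_vertex_cover V E C" and rC: "r \<notin> C"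
  shows "min_vertex_cover (V - closed_nbhd V E r) E (C - open_nbhd V E r)"
proof -
  let ?N = "open_nbhd V E r"
  have fin: "finite V" using G by (simp add: simple_graph_def)
  have vc: "vertex_cover V E C" and cardC: "card C = OPT V E"
    using C by (auto simp: min_vertex_cover_def)
  have "C - closed_nbhd V E r = C - ?N" using rC by (auto simp: closed_nbhd_def)
  hence "vertex_cover (V - closed_nbhd V E r) E (C - ?N)"
    using vertex_cover_Diff[OF vc, of "closed_nbhd V E r"] by simp
  moreover have "card (C - ?N) = OPT V E - card ?N"
    using open_nbhd_subset_vertex_cover[OF rV vc rC] fin cardC
    by (simp add: card_Diff_subset open_nbhd_def)
  ultimately show ?thesis
    using OPT_Diff_closed_nbhd[OF G rV C rC] by (simp add: min_vertex_cover_def)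
qed

lemma min_vertex_cover_Un_open_nbhd:
  assumes G: "simple_graph V E" and rV: "r \<in> V"
    and C: "min_vertex_cover V E C" "r \<notin> C"
    and D: "min_vertex_cover (V - closed_nbhd V E r) E D"
  shows "min_vertex_cover V E (D \<union> open_nbhd V E r)"
proof -
  let ?N = "open_nbhd V E r"
  have fin: "finite V" and sym: "\<And>u v. E u v \<Longrightarrow> E v u"
    using G by (auto simp: simple_graph_def)
  have vcD: "vertex_cover (V - closed_nbhd V E r) E D" using D by (simp add: min_vertex_cover_def)
  have "D \<inter> ?N = {}" using vcD by (auto simp: vertex_cover_def closed_nbhd_def)
  moreover have "finite D" using vertex_cover_finite[OF _ vcD] fin by simp
  moreover have "finite ?N" using fin by (simp add: open_nbhd_def)
  ultimately have "card (D \<union> ?N) = card D + card ?N" by (simp add: card_Un_disjoint)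
  also have "\<dots> = OPT V E"
    using D OPT_Diff_closed_nbhd[OF G rV C] card_open_nbhd_le_OPT[OF fin rV C]
    by (simp add: min_vertex_cover_def)
  finally show ?thesis
    using vertex_cover_Un_open_nbhd[OF sym vcD] by (simp add: min_vertex_cover_def)
qed

lemma blocking_set_Diff_vertex:
  assumes fin: "finite V" and rV: "r \<in> V" and C: "min_vertex_cover V E C" "r \<in> C"
    and Y: "blocking_set V E Y" and rY: "r \<notin> Y"
  shows "blocking_set (V - {r}) E Y"
  unfolding blocking_set_def
proof (intro conjI allI impI notI)
  show "Y \<subseteq> V - {r}" using Y rY by (auto simp: blocking_set_def)
  fix D assume "min_vertex_cover (V - {r}) E D" "Y \<subseteq> D"
  hence "min_vertex_cover V E (insert r D)" "Y \<subseteq> insert r D"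
    using min_vertex_cover_insert_vertex[OF fin rV C] by auto
  thus False using Y by (auto simp: blocking_set_def)
qed

lemma blocking_set_Diff_closed_nbhd:
  assumes G: "simple_graph V E" and rV: "r \<in> V" and C: "min_vertex_cover V E C" "r \<notin> C"
    and Y: "blocking_set V E Y" and rY: "r \<notin> Y"
  shows "blocking_set (V - closed_nbhd V E r) E (Y - closed_nbhd V E r)"
  unfolding blocking_set_def
proof (intro conjI allI impI notI)
  show "Y - closed_nbhd V E r \<subseteq> V - closed_nbhd V E r" using Y by (auto simp: blocking_set_def)
  fix D assume "min_vertex_cover (V - closed_nbhd V E r) E D" "Y - closed_nbhd V E r \<subseteq> D"
  moreover have "Y \<subseteq> (Y - closed_nbhd V E r) \<union> open_nbhd V E r"
    using rY by (auto simp: closed_nbhd_def)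
  ultimately have "min_vertex_cover V E (D \<union> open_nbhd V E r)" "Y \<subseteq> D \<union> open_nbhd V E r"
    using min_vertex_cover_Un_open_nbhd[OF G rV C] by auto
  thus False using Y by (auto simp: blocking_set_def)
qed

lemma blocking_set_of_Diff_blocking_sets:
  assumes G: "simple_graph V E" and rV: "r \<in> V" and AV: "A \<subseteq> V"
    and A': "blocking_set (V - {r}) E A'" "A' \<subseteq> A"
    and A'': "blocking_set (V - closed_nbhd V E r) E A''" "A'' \<subseteq> A"
  shows "blocking_set V E A"
  unfolding blocking_set_def
proof (intro conjI allI impI notI)
  have fin: "finite V" using G by (simp add: simple_graph_def)
  fix C assume C: "min_vertex_cover V E C" and AC: "A \<subseteq> C"
  show False
  proof (cases "r \<in> C")
    case True
    have "A' \<subseteq> C - {r}" using A' AC by (auto simp: blocking_set_def)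
    thus False using min_vertex_cover_Diff_vertex[OF fin C True] A'
      by (auto simp: blocking_set_def)
  next
    case False
    have "A'' \<subseteq> C - open_nbhd V E r" using A'' AC by (auto simp: blocking_set_def closed_nbhd_def)
    thus False using min_vertex_cover_Diff_open_nbhd[OF G rV C False] A''
      by (auto simp: blocking_set_def)
  qed
qed (rule AV)

theorem mainTheorem13:
  fixes V :: "'a set" and E :: "'a \<Rightarrow> 'a \<Rightarrow> bool" and r :: 'a and Y :: "'a set"
  assumes G: "simple_graph V E"
    and rV: "r \<in> V"
    and r_in_some: "\<exists>C. min_vertex_cover V E C \<and> r \<in> C"
    and r_notin_some: "\<exists>C. min_vertex_cover V E C \<and> r \<notin> C"
    and Nr: "closed_nbhd V E r \<subset> V"
    and Y: "minimal_blocking_set V E Y"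
    and rY: "r \<notin> Y"
  shows "(blocking_set (V - {r}) E Y
          \<and> blocking_set (V - closed_nbhd V E r) E (Y - closed_nbhd V E r))
       \<and> (\<forall>Y' Yt. minimal_blocking_set (V - {r}) E Y'
                 \<longrightarrow> minimal_blocking_set (V - closed_nbhd V E r) E Yt
                 \<longrightarrow> blocking_set V E (Y' \<union> Yt))
       \<and> (\<forall>y\<in>Y. \<not> blocking_set (V - {r}) E (Y - {y})
               \<or> \<not> blocking_set (V - closed_nbhd V E r) E (Y - ({y} \<union> closed_nbhd V E r)))"
proof -
  have fin: "finite V" using G by (simp add: simple_graph_def)
  obtain C1 where C1: "min_vertex_cover V E C1" "r \<in> C1" using r_in_some by blast
  obtain C2 where C2: "min_vertex_cover V E C2" "r \<notin> C2" using r_notin_some by blast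
  have YB: "blocking_set V E Y" and Ymin: "\<And>Z. Z \<subset> Y \<Longrightarrow> \<not> blocking_set V E Z"
    using Y by (auto simp: minimal_blocking_set_def)
  have part_ii: "blocking_set V E (Y' \<union> Yt)"
    if "minimal_blocking_set (V - {r}) E Y'"
      "minimal_blocking_set (V - closed_nbhd V E r) E Yt" for Y' Yt
  proof (rule blocking_set_of_Diff_blocking_sets[OF G rV])
    show "blocking_set (V - {r}) E Y'" "blocking_set (V - closed_nbhd V E r) E Yt"
      using that by (simp_all add: minimal_blocking_set_def)
    thus "Y' \<union> Yt \<subseteq> V" by (auto simp: blocking_set_def)
  qed auto
  have part_iii: "\<not> blocking_set (V - {r}) E (Y - {y})
      \<or> \<not> blocking_set (V - closed_nbhd V E r) E (Y - ({y} \<union> closed_nbhd V E r))"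
    if "y \<in> Y" for y
  proof -
    have "\<not> blocking_set V E (Y - {y})" using Ymin that by blast
    moreover have "Y - {y} \<subseteq> V" using YB by (auto simp: blocking_set_def)
    ultimately show ?thesis
      using blocking_set_of_Diff_blocking_sets[OF G rV, of "Y - {y}" "Y - {y}"] by blast
  qed
  show ?thesis
    using blocking_set_Diff_vertex[OF fin rV C1 YB rY]
      blocking_set_Diff_closed_nbhd[OF G rV C2 YB rY] part_ii part_iii
    by blast
qed

end
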